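(* Let $Q(z)$ be a $k\times k$ Hermite matrix of Laurent polynomials with $Q_{1,1}(z)\not\equiv0$ and $$\operatorname{len}(Q_{1,1})\le\operatorname{len}(Q_{2,2})\le\dots\le\operatorname{len}(Q_{k,k}).$$ Suppose $0\le s<k$ and $Q$ is diagonally dominant at each of its diagonal entries $1,\dots,s$ (no condition if $s=0$). Then there exists a $k\times k$ unimodular matrix $U(z)$ of Laurent polynomials such that $\widetilde Q(z):=U(z)Q(z)U^\star(z)$ is diagonally dominant at each of its diagonal entries $1,\dots,s+1$, and the top-left $(s+1)\times(s+1)$ submatrix of $\widetilde Q$ equals that of $Q$.
   Context: For a matrix $U(z)=\sum_k U_k z^k$ of Laurent polynomials, $U^\star(z):=\sum_k\overline{U_k}^T z^{-k}$; Hermite means $A^\star=A$. A square matrix of Laurent polynomials is unimodular if its determinant is a nonzero monomial $cz^m$ ($c\neq0$). For a Laurent polynomial $u\not\equiv0$: $\deg(u)$ is its highest degree, $\operatorname{ldeg}(u)$ its lowest degree, $\operatorname{len}(u):=\deg(u)-\operatorname{ldeg}(u)$, and $\operatorname{fs}(u):=[\operatorname{ldeg}(u),\deg(u)]$ (an integer interval); for $u\equiv0$, $\operatorname{len}(u):=-\infty$, $\deg(u):=-\infty$ and $\operatorname{fs}(u):=\emptyset$. A $k\times k$ matrix $Q(z)$ of Laurent polynomials is diagonally dominant at the diagonal entry $s$ if (1) for all $i\ne s$: $\operatorname{fs}(Q_{i,s})\subsetneq\operatorname{fs}(Q_{s,s})$ and $\operatorname{fs}(Q_{s,i})\subsetneq\operatorname{fs}(Q_{s,s})$;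 and (2) for all $i>s$: $\deg(Q_{s,i})<\deg(Q_{s,s})$. $Q$ is diagonally dominant if it is diagonally dominant at every diagonal entry. *)

theory Defs
  imports "HOL-Library.Poly_Mapping" "HOL-Library.Extended_Real" "Jordan_Normal_Form.Determinant"
begin

text \<open>Laurent polynomials over the complex numbers in z: finitely supported
  maps from exponents (int) to coefficients; multiplication is convolution.\<close>
type_synonym lpoly = "int \<Rightarrow>\<^sub>0 complex"

definition lstar :: "lpoly \<Rightarrow> lpoly" where
  "lstar p = Abs_poly_mapping (\<lambda>n. cnj (Poly_Mapping.lookup p (- n)))"

definition star_mat :: "lpoly mat \<Rightarrow> lpoly mat" where
  "star_mat U = mat (dim_col U) (dim_row U) (\<lambda>(i, j). lstar (U $$ (j, i)))"

definition hermite :: "lpoly mat \<Rightarrow> bool" where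
  "hermite A \<longleftrightarrow> star_mat A = A"

definition unimodular :: "nat \<Rightarrow> lpoly mat \<Rightarrow> bool" where
  "unimodular k U \<longleftrightarrow> U \<in> carrier_mat k k \<and>
     (\<exists>c m. c \<noteq> 0 \<and> det U = Poly_Mapping.single m c)"

definition ldegree :: "lpoly \<Rightarrow> ereal" where
  "ldegree p = (if p = 0 then -\<infinity> else ereal (of_int (Max (Poly_Mapping.keys p))))"

definition llen :: "lpoly \<Rightarrow> ereal" where
  "llen p = (if p = 0 then -\<infinity> else ereal (of_int (Max (Poly_Mapping.keys p) - Min (Poly_Mapping.keys p))))"

definition fs :: "lpoly \<Rightarrow> int set" where
  "fs p = (if p = 0 then {} else {Min (Poly_Mapping.keys p) .. Max (Poly_Mapping.keys p)})"

text \<open>diagonal dominance at diagonal entry s (0-based index) of a k x k matrix\<close>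
definition diag_dom_at :: "nat \<Rightarrow> lpoly mat \<Rightarrow> nat \<Rightarrow> bool" where
  "diag_dom_at k Q s \<longleftrightarrow>
     (\<forall>i<k. i \<noteq> s \<longrightarrow> fs (Q $$ (i, s)) \<subset> fs (Q $$ (s, s)) \<and>
                     fs (Q $$ (s, i)) \<subset> fs (Q $$ (s, s))) \<and>
     (\<forall>i<k. s < i \<longrightarrow> ldegree (Q $$ (s, i)) < ldegree (Q $$ (s, s)))"

end

theory Submission
  imports Defs
begin

text \<open>Let \<open>D t\<close> be the degree of the Hermitian diagonal entry \<open>Q t t\<close>, whose frequency support
  is then \<open>[-D t, D t]\<close>; the ordering of the lengths makes \<open>D\<close> nondecreasing. Dominance at
  \<open>t < s\<close> confines the entries right of \<open>Q t t\<close> to \<open>[-D t, D t - 1]\<close>, and by hermiticity those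
  below it to \<open>[-D t + 1, D t]\<close>. The leading \<open>(s+1) \<times> (s+1)\<close> block therefore acts as a divisor:
  Euclid-style elimination reduces any row modulo the block rows until its \<open>j\<close>-th entry lies in
  the window \<open>[-D j + 1, D j]\<close>. Reducing every row below the block and conjugating \<open>Q\<close> with the
  lower unitriangular matrix \<open>[[I, 0], [X, I]]\<close> keeps the leading block, puts the new entries
  left of the diagonal into their windows, and hermiticity mirrors them to the right of the
  diagonal: this is dominance at the first \<open>s + 1\<close> diagonal entries.\<close>

section \<open>Laurent polynomials and their frequency support\<close>

lemma lookup_single_mult:
  "Poly_Mapping.lookup (Poly_Mapping.single m c * (p :: lpoly)) e = c * Poly_Mapping.lookup p (e - m)"
proof -
  have "Poly_Mapping.lookup (Poly_Mapping.single m c * p) e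
      = Sum_any (\<lambda>l. (c * Sum_any (\<lambda>q. Poly_Mapping.lookup p q when e = l + q)) when m = l)"
    unfolding lookup_mult lookup_single by (simp add: when_mult)
  also have "\<dots> = c * Sum_any (\<lambda>q. Poly_Mapping.lookup p q when e = m + q)"
    by simp
  also have "Sum_any (\<lambda>q. Poly_Mapping.lookup p q when e = m + q)
      = Sum_any (\<lambda>q. Poly_Mapping.lookup p q when q = e - m)"
    by (rule Sum_any.cong) (auto simp: when_def)
  finally show ?thesis by simp
qed

lemma lookup_lstar [simp]: "Poly_Mapping.lookup (lstar p) n = cnj (Poly_Mapping.lookup p (- n))"
proof -
  have "{n. cnj (Poly_Mapping.lookup p (- n)) \<noteq> 0} = uminus ` Poly_Mapping.keys p"
    by (force simp: in_keys_iff image_iff)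
  then show ?thesis
    unfolding lstar_def by simp
qed

lemma keys_lstar: "Poly_Mapping.keys (lstar p) = uminus ` Poly_Mapping.keys p"
  by (force simp: in_keys_iff image_iff)

lemma keys_lstar_subset: "Poly_Mapping.keys q \<subseteq> {a..b} \<Longrightarrow> Poly_Mapping.keys (lstar q) \<subseteq> {- b..- a}"
  by (auto simp: keys_lstar)

lemma lstar_add: "lstar (p + q) = lstar p + lstar q"
  by (rule poly_mapping_eqI) (simp add: lookup_add)

lemma lstar_zero [simp]: "lstar 0 = 0"
  by (rule poly_mapping_eqI) simp

lemma lstar_one [simp]: "lstar 1 = 1"
  by (rule poly_mapping_eqI) (simp add: lookup_one when_def)

lemma lstar_lstar [simp]: "lstar (lstar p) = p"
  by (rule poly_mapping_eqI) simp

lemma lstar_sum: "lstar (sum f A) = (\<Sum>x\<in>A. lstar (f x))"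
  by (induction A rule: infinite_finite_induct) (auto simp: lstar_add)

lemma lstar_mult: "lstar ((p :: lpoly) * q) = lstar p * lstar q"
proof (induction p rule: update_induct)
  case const
  then show ?case by simp
next
  case (update f a b)
  have "lstar (Poly_Mapping.single a b * q) = lstar (Poly_Mapping.single a b) * lstar q"
  proof (rule poly_mapping_eqI)
    fix e
    have "lstar (Poly_Mapping.single a b) = Poly_Mapping.single (- a) (cnj b)"
      by (rule poly_mapping_eqI) (auto simp: lookup_single when_def)
    then show "Poly_Mapping.lookup (lstar (Poly_Mapping.single a b * q)) e
        = Poly_Mapping.lookup (lstar (Poly_Mapping.single a b) * lstar q) e"
      by (simp only: lookup_lstar lookup_single_mult) (simp add: lookup_single when_def minus_diff_commute)
  qed
  moreover have "Poly_Mapping.update a b f = f + Poly_Mapping.single a b"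
    using update.hyps
    by (intro poly_mapping_eqI) (auto simp: lookup_update lookup_add lookup_single when_def in_keys_iff)
  ultimately show ?case
    using update.IH by (simp add: distrib_right lstar_add)
qed

lemma Min_keys_self_adjoint:
  assumes "lstar p = p" "p \<noteq> 0"
  shows "Min (Poly_Mapping.keys p) = - Max (Poly_Mapping.keys p)"
proof -
  have "Poly_Mapping.keys p = uminus ` Poly_Mapping.keys p"
    using keys_lstar[of p] assms(1) by simp
  then show ?thesis
    using minus_Max_eq_Min[of "Poly_Mapping.keys p"] assms(2) by simp
qed

lemma fs_subset_iff: "fs p \<subseteq> {a..b} \<longleftrightarrow> Poly_Mapping.keys p \<subseteq> {a..b}"
proof (cases "p = 0")
  case False
  define K where "K = Poly_Mapping.keys p"
  have K: "finite K" "K \<noteq> {}"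
    using False by (simp_all add: K_def)
  have "Min K \<le> Max K"
    using K by simp
  then have "fs p \<subseteq> {a..b} \<longleftrightarrow> a \<le> Min K \<and> Max K \<le> b"
    using False by (simp add: fs_def K_def[symmetric])
  also have "\<dots> \<longleftrightarrow> K \<subseteq> {a..b}"
    using K by (auto simp: subset_iff)
  finally show ?thesis
    by (simp add: K_def)
qed (simp add: fs_def)

lemma fs_eq_atLeastAtMostD:
  assumes "fs p = {a..b}" "a \<le> b"
  shows "p \<noteq> 0" "Min (Poly_Mapping.keys p) = a" "Max (Poly_Mapping.keys p) = b"
proof -
  show "p \<noteq> 0"
    using assms by (auto simp: fs_def)
  moreover have "Min (Poly_Mapping.keys p) \<le> Max (Poly_Mapping.keys p)"
    using calculation by simp
  ultimately show "Min (Poly_Mapping.keys p) = a" "Max (Poly_Mapping.keys p) = b"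
    using assms by (simp_all add: fs_def)
qed

lemma ldegree_eq_if_fs:
  assumes "fs p = {a..b}" "a \<le> b"
  shows "ldegree p = ereal (of_int b)"
  using fs_eq_atLeastAtMostD[OF assms] by (simp add: ldegree_def)

lemma ldegree_less_iff:
  "ldegree p < ereal (of_int d) \<longleftrightarrow> Poly_Mapping.keys p \<subseteq> {..<d}"
  by (cases "p = 0") (auto simp: ldegree_def subset_iff)

section \<open>Hermitian matrices and diagonal dominance\<close>

lemma star_mat_dims [simp]:
  "dim_row (star_mat U) = dim_col U" "dim_col (star_mat U) = dim_row U"
  by (simp_all add: star_mat_def)

lemma index_star_mat [simp]:
  "i < dim_col U \<Longrightarrow> j < dim_row U \<Longrightarrow> star_mat U $$ (i, j) = lstar (U $$ (j, i))"
  by (simp add: star_mat_def)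

lemma star_mat_carrier: "U \<in> carrier_mat m n \<Longrightarrow> star_mat U \<in> carrier_mat n m"
  by (intro carrier_matI) auto

lemma star_mat_star_mat [simp]: "star_mat (star_mat U) = U"
  by (rule eq_matI) simp_all

lemma star_mat_mult:
  assumes "A \<in> carrier_mat m n" "B \<in> carrier_mat n p"
  shows "star_mat (A * B) = star_mat B * star_mat A"
proof (rule eq_matI)
  fix i j
  assume "i < dim_row (star_mat B * star_mat A)" "j < dim_col (star_mat B * star_mat A)"
  then show "star_mat (A * B) $$ (i, j) = (star_mat B * star_mat A) $$ (i, j)"
    using assms by (simp add: scalar_prod_def lstar_sum lstar_mult mult.commute)
qed (use assms in simp_all)

lemma hermite_entry:
  assumes "Q \<in> carrier_mat k k" "hermite Q" "i < k" "j < k"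
  shows "Q $$ (i, j) = lstar (Q $$ (j, i))"
  using assms index_star_mat[of i Q j] by (simp add: hermite_def)

lemma star_mat_eq_if_hermite: "hermite Q \<Longrightarrow> star_mat Q = Q"
  by (simp add: hermite_def)

lemma hermite_congruence:
  assumes "Q \<in> carrier_mat k k" "hermite Q" "U \<in> carrier_mat k k"
  shows "hermite (U * Q * star_mat U)"
proof -
  have U': "star_mat U \<in> carrier_mat k k"
    using assms(3) by (rule star_mat_carrier)
  have "star_mat (U * Q * star_mat U) = star_mat (star_mat U) * star_mat (U * Q)"
    using assms U' by (intro star_mat_mult[of _ k k _ k]) auto
  also have "\<dots> = U * (Q * star_mat U)"
    using assms by (simp add: star_mat_mult[of U k k Q k] star_mat_eq_if_hermite)
  also have "\<dots> = U * Q * star_mat U"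
    using assms U' by (simp add: assoc_mult_mat[of U k k Q k "star_mat U" k])
  finally show ?thesis
    by (simp add: hermite_def)
qed

lemma diag_dom_at_if_windows:
  assumes M: "M \<in> carrier_mat k k" "hermite M" and "t < k" "0 \<le> D"
    and diag: "fs (M $$ (t, t)) = {- D..D}"
    and upper: "\<And>i. t < i \<Longrightarrow> i < k \<Longrightarrow> Poly_Mapping.keys (M $$ (t, i)) \<subseteq> {- D..D - 1}"
    and lower: "\<And>i. i < t \<Longrightarrow> Poly_Mapping.keys (M $$ (t, i)) \<subseteq> {- D + 1..D}"
  shows "diag_dom_at k M t"
proof -
  have fs_psubset: "fs q \<subset> {- D..D}"
    if "Poly_Mapping.keys q \<subseteq> {- D..D - 1} \<or> Poly_Mapping.keys q \<subseteq> {- D + 1..D}" for q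
  proof -
    have "{- D..D - 1} \<subset> {- D..D}" "{- D + 1..D} \<subset> {- D..D}"
      using \<open>0 \<le> D\<close> by auto
    then show ?thesis
      using that by (auto simp flip: fs_subset_iff)
  qed
  have strict: "fs (M $$ (t, i)) \<subset> fs (M $$ (t, t)) \<and> fs (M $$ (i, t)) \<subset> fs (M $$ (t, t))"
    if "i < k" and "i \<noteq> t" for i
  proof -
    have mirror: "M $$ (i, t) = lstar (M $$ (t, i))"
      using hermite_entry[OF M \<open>i < k\<close> \<open>t < k\<close>] .
    consider "t < i" | "i < t"
      using \<open>i \<noteq> t\<close> by linarith
    then have "Poly_Mapping.keys (M $$ (t, i)) \<subseteq> {- D..D - 1} \<and> Poly_Mapping.keys (M $$ (i, t)) \<subseteq> {- D + 1..D}
      \<or> Poly_Mapping.keys (M $$ (t, i)) \<subseteq> {- D + 1..D} \<and> Poly_Mapping.keys (M $$ (i, t)) \<subseteq> {- D..D - 1}"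
    proof cases
      case 1
      then show ?thesis
        using upper[OF 1 \<open>i < k\<close>] keys_lstar_subset[OF upper[OF 1 \<open>i < k\<close>]] by (simp add: mirror)
    next
      case 2
      then show ?thesis
        using lower[OF 2] keys_lstar_subset[OF lower[OF 2]] by (simp add: mirror)
    qed
    then show ?thesis
      using fs_psubset[of "M $$ (t, i)"] fs_psubset[of "M $$ (i, t)"] diag by auto
  qed
  have "ldegree (M $$ (t, t)) = ereal (of_int D)"
    using ldegree_eq_if_fs[OF diag] \<open>0 \<le> D\<close> by simp
  then have ldegree_less: "ldegree (M $$ (t, i)) < ldegree (M $$ (t, t))" if "t < i" "i < k" for i
    using upper[OF that] by (simp add: ldegree_less_iff subset_eq)
  show ?thesis
    unfolding diag_dom_at_def using strict ldegree_less by auto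
qed

lemma keys_upper_if_diag_dom_at:
  assumes "diag_dom_at k M t" "fs (M $$ (t, t)) = {- D..D}" "0 \<le> D" "t < i" "i < k"
  shows "Poly_Mapping.keys (M $$ (t, i)) \<subseteq> {- D..D - 1}"
proof -
  have "fs (M $$ (t, i)) \<subseteq> {- D..D}" "ldegree (M $$ (t, i)) < ereal (of_int D)"
    using assms ldegree_eq_if_fs[OF assms(2)] unfolding diag_dom_at_def by auto
  then have "Poly_Mapping.keys (M $$ (t, i)) \<subseteq> {- D..D} \<inter> {..<D}"
    by (simp add: fs_subset_iff ldegree_less_iff)
  also have "{- D..D} \<inter> {..<D} = {- D..D - 1}"
    by auto
  finally show ?thesis .
qed

section \<open>Reduction modulo a dominant block\<close>

lemma mset_set_mult_replace:
  assumes "wf W" "finite X" "finite Y" "p \<in> Y"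
    and "X \<subseteq> Y - {p} \<union> {q. (q, p) \<in> W}"
  shows "(mset_set X, mset_set Y) \<in> Multiset.mult W"
proof -
  have "p \<notin> X"
    using assms(5) wf_not_refl[OF assms(1), of p] by auto
  have X: "mset_set X = mset_set (X \<inter> Y) + mset_set (X - Y)"
    using assms(2) mset_set_Union[of "X \<inter> Y" "X - Y"] by (simp add: Int_Diff_Un) blast
  have Y: "mset_set Y = mset_set (X \<inter> Y) + mset_set (Y - X)"
    using assms(3) mset_set_Union[of "X \<inter> Y" "Y - X"] by (simp add: Int_commute[of X Y] Int_Diff_Un) blast
  have "(mset_set (X \<inter> Y) + mset_set (X - Y), mset_set (X \<inter> Y) + mset_set (Y - X)) \<in> Multiset.mult W"
  proof (rule one_step_implies_mult)
    have "p \<in># mset_set (Y - X)"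
      using assms(3,4) \<open>p \<notin> X\<close> by simp
    then show "mset_set (Y - X) \<noteq> {#}"
      by auto
    show "\<forall>q\<in>#mset_set (X - Y). \<exists>p'\<in>#mset_set (Y - X). (q, p') \<in> W"
      using assms(2,5) \<open>p \<in># mset_set (Y - X)\<close> by auto
  qed
  then show ?thesis
    by (simp only: X Y)
qed

definition add_row_comb :: "nat \<Rightarrow> (nat \<Rightarrow> nat \<Rightarrow> lpoly) \<Rightarrow> (nat \<Rightarrow> lpoly) \<Rightarrow> (nat \<Rightarrow> lpoly) \<Rightarrow> nat \<Rightarrow> lpoly"
  where "add_row_comb n R r x j = r j + (\<Sum>t<n. x t * R t j)"

lemma add_row_comb_zero: "add_row_comb n R r (\<lambda>_. 0) = r"
  by (rule ext) (simp add: add_row_comb_def)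

lemma add_row_comb_shift:
  assumes "t0 < n"
  shows "add_row_comb n R r (\<lambda>t. x t - (if t = t0 then a else 0))
    = add_row_comb n R (\<lambda>j. r j - a * R t0 j) x"
  using assms by (intro ext) (simp add: add_row_comb_def left_diff_distrib sum_subtractf if_distrib[of "\<lambda>u. u * _"] cong: if_cong)

text \<open>Each step subtracts a shifted multiple of a pivot row to cancel one bad coefficient; the
  bad coefficients it creates are \<open>W\<close>-smaller, so the multiset of bad positions decreases in
  the multiset extension of \<open>W\<close>.\<close>

lemma reduce_rows:
  fixes R :: "nat \<Rightarrow> nat \<Rightarrow> lpoly" and bad :: "nat \<Rightarrow> int \<Rightarrow> bool"
  assumes "wf W"
    and pivot: "\<And>j0 e0. j0 < n \<Longrightarrow> bad j0 e0 \<Longrightarrow> \<exists>m. Poly_Mapping.lookup (R j0 j0) (e0 - m) \<noteq> 0 \<and>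
      (\<forall>j<n. \<forall>e. bad j e \<longrightarrow> (j, e) \<noteq> (j0, e0) \<longrightarrow> e - m \<in> Poly_Mapping.keys (R j0 j)
        \<longrightarrow> ((j, e), (j0, e0)) \<in> W)"
  shows "\<exists>x. \<forall>j<n. \<forall>e\<in>Poly_Mapping.keys (add_row_comb n R r x j). \<not> bad j e"
proof -
  define bads where "bads r = {(j, e). j < n \<and> bad j e \<and> Poly_Mapping.lookup (r j) e \<noteq> 0}"
    for r :: "nat \<Rightarrow> lpoly"
  have finite_bads: "finite (bads r)" for r
    by (rule finite_subset[of _ "\<Union>j<n. {j} \<times> Poly_Mapping.keys (r j)"]) (auto simp: bads_def in_keys_iff)
  have "\<exists>x. bads (add_row_comb n R r x) = {}"
  proof (induction r rule: wf_induct_rule[OF wf_inv_image[OF wf_mult[OF \<open>wf W\<close>], of "\<lambda>r. mset_set (bads r)"]])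
    case (1 r)
    show ?case
    proof (cases "bads r = {}")
      case True
      then show ?thesis
        by (metis add_row_comb_zero)
    next
      case False
      then obtain j0 e0 where p: "(j0, e0) \<in> bads r"
        by auto
      then have "j0 < n" "bad j0 e0"
        by (simp_all add: bads_def)
      with pivot obtain m where m: "Poly_Mapping.lookup (R j0 j0) (e0 - m) \<noteq> 0"
        and smaller: "\<forall>j<n. \<forall>e. bad j e \<longrightarrow> (j, e) \<noteq> (j0, e0) \<longrightarrow> e - m \<in> Poly_Mapping.keys (R j0 j)
          \<longrightarrow> ((j, e), (j0, e0)) \<in> W"
        by blast
      define c where "c = Poly_Mapping.lookup (r j0) e0 / Poly_Mapping.lookup (R j0 j0) (e0 - m)"
      define r' where "r' = (\<lambda>j. r j - Poly_Mapping.single m c * R j0 j)"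
      have lookup_r': "Poly_Mapping.lookup (r' j) e
          = Poly_Mapping.lookup (r j) e - c * Poly_Mapping.lookup (R j0 j) (e - m)" for j e
        by (simp add: r'_def lookup_minus lookup_single_mult)
      have "bads r' \<subseteq> bads r - {(j0, e0)} \<union> {q. (q, (j0, e0)) \<in> W}"
      proof
        fix q assume "q \<in> bads r'"
        then obtain j e where q: "q = (j, e)" "j < n" "bad j e" "Poly_Mapping.lookup (r' j) e \<noteq> 0"
          by (auto simp: bads_def)
        have "(j, e) \<noteq> (j0, e0)"
          using q(4) m by (auto simp: lookup_r' c_def)
        moreover have "(j, e) \<in> bads r \<or> e - m \<in> Poly_Mapping.keys (R j0 j)"
          using q by (auto simp: bads_def lookup_r' in_keys_iff)
        ultimately show "q \<in> bads r - {(j0, e0)} \<union> {q. (q, (j0, e0)) \<in> W}"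
          using smaller q by auto
      qed
      then have "(mset_set (bads r'), mset_set (bads r)) \<in> Multiset.mult W"
        using mset_set_mult_replace[OF \<open>wf W\<close> finite_bads finite_bads p] by blast
      then obtain x' where "bads (add_row_comb n R r' x') = {}"
        using "1.IH" by auto
      then have "bads (add_row_comb n R r (\<lambda>t. x' t - (if t = j0 then Poly_Mapping.single m c else 0))) = {}"
        by (simp add: add_row_comb_shift[OF \<open>j0 < n\<close>] r'_def)
      then show ?thesis
        by blast
    qed
  qed
  then show ?thesis
    by (auto simp: bads_def in_keys_iff)
qed

locale dominant_block =
  fixes n :: nat and R :: "nat \<Rightarrow> nat \<Rightarrow> lpoly" and D :: "nat \<Rightarrow> int"
  assumes fs_diag: "t < n \<Longrightarrow> fs (R t t) = {- D t..D t}"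
    and D_nonneg: "t < n \<Longrightarrow> 0 \<le> D t"
    and keys_lower: "j < t \<Longrightarrow> t < n \<Longrightarrow> Poly_Mapping.keys (R t j) \<subseteq> {- D j + 1..D j}"
    and keys_upper: "t < j \<Longrightarrow> j < n \<Longrightarrow> Poly_Mapping.keys (R t j) \<subseteq> {- D t..D t - 1}"
    and D_mono: "t \<le> j \<Longrightarrow> j < n \<Longrightarrow> D t \<le> D j"
begin

lemma keys_diag_extremes:
  assumes "t < n"
  shows "D t \<in> Poly_Mapping.keys (R t t)" "- D t \<in> Poly_Mapping.keys (R t t)"
proof -
  have "- D t \<le> D t"
    using D_nonneg[OF assms] by simp
  note fs = fs_eq_atLeastAtMostD[OF fs_diag[OF assms] this]
  show "D t \<in> Poly_Mapping.keys (R t t)" "- D t \<in> Poly_Mapping.keys (R t t)"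
    using Max_in[of "Poly_Mapping.keys (R t t)"] Min_in[of "Poly_Mapping.keys (R t t)"] fs by auto
qed

lemma keys_column:
  assumes "i < n" "j < n" "e \<in> Poly_Mapping.keys (R i j)"
  shows "- D j \<le> e \<and> e \<le> D j \<and> (e = D j \<longrightarrow> j \<le> i) \<and> (e = - D j \<longrightarrow> i \<le> j)"
proof -
  consider "i = j" | "i < j" | "j < i"
    by linarith
  then show ?thesis
  proof cases
    case 1
    then have "Poly_Mapping.keys (R i j) \<subseteq> {- D j..D j}"
      using fs_diag[OF assms(2)] fs_subset_iff by blast
    then show ?thesis
      using assms(3) 1 by auto
  next
    case 2
    moreover have "D i \<le> D j"
      using D_mono 2 assms(2) by simp
    ultimately show ?thesis
      using keys_upper[OF 2 assms(2)] assms(3) by fastforce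
  next
    case 3
    then show ?thesis
      using keys_lower[OF 3 assms(1)] assms(3) by fastforce
  qed
qed

theorem reduce_into_windows:
  "\<exists>x. \<forall>j<n. Poly_Mapping.keys (add_row_comb n R r x j) \<subseteq> {- D j + 1..D j}"
proof -
  txt \<open>Coefficients above the window of column \<open>j0\<close> are cancelled against the top coefficient
    \<open>D j0\<close> of \<open>R j0 j0\<close>, those below it against the bottom one \<open>- D j0\<close>; by \<open>keys_column\<close>
    this only creates bad coefficients of smaller rank.\<close>
  define rank where "rank = (\<lambda>(j, e). if D j < e then (1 :: nat, nat (e - D j), j) else (0, nat (- e - D j), n - j))"
  define W where "W = inv_image (less_than <*lex*> less_than <*lex*> less_than) rank"
  have "\<exists>x. \<forall>j<n. \<forall>e\<in>Poly_Mapping.keys (add_row_comb n R r x j). \<not> e \<notin> {- D j + 1..D j}"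
  proof (rule reduce_rows)
    show "wf W"
      by (auto simp: W_def intro!: wf_inv_image wf_lex_prod)
  next
    fix j0 e0
    assume j0: "j0 < n" and bad0: "e0 \<notin> {- D j0 + 1..D j0}"
    show "\<exists>m. Poly_Mapping.lookup (R j0 j0) (e0 - m) \<noteq> 0 \<and>
      (\<forall>j<n. \<forall>e. e \<notin> {- D j + 1..D j} \<longrightarrow> (j, e) \<noteq> (j0, e0) \<longrightarrow>
        e - m \<in> Poly_Mapping.keys (R j0 j) \<longrightarrow> ((j, e), (j0, e0)) \<in> W)"
    proof (cases "D j0 < e0")
      case True
      show ?thesis
      proof (intro exI[of _ "e0 - D j0"] conjI allI impI)
        show "Poly_Mapping.lookup (R j0 j0) (e0 - (e0 - D j0)) \<noteq> 0"
          using keys_diag_extremes(1)[OF j0] by (simp add: in_keys_iff)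
        fix j e
        assume "j < n" "e \<notin> {- D j + 1..D j}" "(j, e) \<noteq> (j0, e0)"
          and "e - (e0 - D j0) \<in> Poly_Mapping.keys (R j0 j)"
        with keys_column[OF j0 this(1) this(4)]
        have "e - D j < e0 - D j0 \<or> e - D j = e0 - D j0 \<and> j < j0"
          by (cases "j = j0") auto
        then show "((j, e), (j0, e0)) \<in> W"
          using True by (auto simp: W_def rank_def)
      qed
    next
      case False
      then have "e0 \<le> - D j0"
        using bad0 by auto
      show ?thesis
      proof (intro exI[of _ "e0 + D j0"] conjI allI impI)
        show "Poly_Mapping.lookup (R j0 j0) (e0 - (e0 + D j0)) \<noteq> 0"
          using keys_diag_extremes(2)[OF j0] by (simp add: in_keys_iff)
        fix j e
        assume "j < n" "e \<notin> {- D j + 1..D j}" "(j, e) \<noteq> (j0, e0)"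
          and "e - (e0 + D j0) \<in> Poly_Mapping.keys (R j0 j)"
        with keys_column[OF j0 this(1) this(4)] \<open>e0 \<le> - D j0\<close>
        have "e \<le> - D j" "- e - D j < - e0 - D j0 \<or> - e - D j = - e0 - D j0 \<and> j0 < j"
          by (cases "j = j0"; auto)+
        then show "((j, e), (j0, e0)) \<in> W"
          using False \<open>j < n\<close> D_nonneg[OF \<open>j < n\<close>] by (auto simp: W_def rank_def)
      qed
    qed
  qed
  then show ?thesis
    by (simp add: subset_eq)
qed

lemma diag_dom_at_if_reduced:
  assumes M: "M \<in> carrier_mat k k" "hermite M" and "n \<le> k" "t < n"
    and block: "\<And>i j. i < n \<Longrightarrow> j < n \<Longrightarrow> M $$ (i, j) = R i j"
    and reduced: "\<And>i j. n \<le> i \<Longrightarrow> i < k \<Longrightarrow> j < n \<Longrightarrow> Poly_Mapping.keys (M $$ (i, j)) \<subseteq> {- D j + 1..D j}"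
  shows "diag_dom_at k M t"
proof (rule diag_dom_at_if_windows[OF M])
  show "t < k" "0 \<le> D t" "fs (M $$ (t, t)) = {- D t..D t}"
    using assms D_nonneg fs_diag by simp_all
next
  fix i
  assume "t < i" "i < k"
  show "Poly_Mapping.keys (M $$ (t, i)) \<subseteq> {- D t..D t - 1}"
  proof (cases "i < n")
    case True
    then show ?thesis
      using keys_upper[OF \<open>t < i\<close>] block \<open>t < n\<close> by simp
  next
    case False
    have "M $$ (t, i) = lstar (M $$ (i, t))"
      using hermite_entry[OF M _ \<open>i < k\<close>, of t] \<open>t < n\<close> \<open>n \<le> k\<close> by simp
    moreover have "Poly_Mapping.keys (M $$ (i, t)) \<subseteq> {- D t + 1..D t}"
      using reduced False \<open>i < k\<close> \<open>t < n\<close> by simp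
    ultimately show ?thesis
      using keys_lstar_subset by fastforce
  qed
next
  fix i
  assume "i < t"
  then have "Poly_Mapping.keys (M $$ (t, i)) \<subseteq> {- D i + 1..D i}"
    using keys_lower block \<open>t < n\<close> by simp
  moreover have "D i \<le> D t"
    using D_mono \<open>i < t\<close> \<open>t < n\<close> by simp
  ultimately show "Poly_Mapping.keys (M $$ (t, i)) \<subseteq> {- D t + 1..D t}"
    by auto
qed

end

lemma dominant_block_if_diag_dom_at:
  assumes Q: "Q \<in> carrier_mat k k" "hermite Q" and "n \<le> k"
    and diag: "\<And>t. t < n \<Longrightarrow> Q $$ (t, t) \<noteq> 0"
    and mono: "\<And>i j. i \<le> j \<Longrightarrow> j < n \<Longrightarrow> llen (Q $$ (i, i)) \<le> llen (Q $$ (j, j))"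
    and dom: "\<And>t. Suc t < n \<Longrightarrow> diag_dom_at k Q t"
    and D: "\<And>t. D t = Max (Poly_Mapping.keys (Q $$ (t, t)))"
  shows "dominant_block n (\<lambda>i j. Q $$ (i, j)) D"
proof -
  have Min_diag: "Min (Poly_Mapping.keys (Q $$ (t, t))) = - D t" if "t < n" for t
    using Min_keys_self_adjoint[OF _ diag[OF that]] hermite_entry[OF Q, of t t] that \<open>n \<le> k\<close>
    by (simp add: D)
  have fs_diag: "fs (Q $$ (t, t)) = {- D t..D t}" if "t < n" for t
    using diag[OF that] Min_diag[OF that] by (simp add: fs_def D)
  have D_nonneg: "0 \<le> D t" if "t < n" for t
  proof -
    have "Min (Poly_Mapping.keys (Q $$ (t, t))) \<le> Max (Poly_Mapping.keys (Q $$ (t, t)))"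
      using diag[OF that] by simp
    then show ?thesis
      using Min_diag[OF that] by (simp add: D)
  qed
  have llen_diag: "llen (Q $$ (t, t)) = ereal (of_int (2 * D t))" if "t < n" for t
    using diag[OF that] Min_diag[OF that] by (simp add: llen_def D[symmetric])
  have keys_upper: "Poly_Mapping.keys (Q $$ (t, j)) \<subseteq> {- D t..D t - 1}" if "t < j" "j < n" for t j
    using keys_upper_if_diag_dom_at[OF dom fs_diag D_nonneg] that \<open>n \<le> k\<close> by simp
  show ?thesis
  proof
    fix t j
    assume "j < t" "t < n"
    then have "Q $$ (t, j) = lstar (Q $$ (j, t))"
      using hermite_entry[OF Q, of t j] \<open>n \<le> k\<close> by simp
    then show "Poly_Mapping.keys (Q $$ (t, j)) \<subseteq> {- D j + 1..D j}"
      using keys_lstar_subset[OF keys_upper[OF \<open>j < t\<close> \<open>t < n\<close>]] by simp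
  next
    fix t j
    assume "t \<le> j" "j < n"
    then have "llen (Q $$ (t, t)) \<le> llen (Q $$ (j, j))"
      by (rule mono)
    then show "D t \<le> D j"
      using llen_diag \<open>t \<le> j\<close> \<open>j < n\<close> by simp
  qed (use fs_diag D_nonneg keys_upper in auto)
qed

section \<open>The unimodular congruence\<close>

definition elim_mat :: "nat \<Rightarrow> nat \<Rightarrow> (nat \<Rightarrow> nat \<Rightarrow> lpoly) \<Rightarrow> lpoly mat"
  where "elim_mat k n X = mat k k (\<lambda>(i, j). if i = j then 1 else if n \<le> i \<and> j < n then X i j else 0)"

lemma elim_mat_carrier: "elim_mat k n X \<in> carrier_mat k k"
  by (simp add: elim_mat_def)

lemma unimodular_elim_mat: "unimodular k (elim_mat k n X)"
proof -
  have "det (elim_mat k n X) = prod_list (diag_mat (elim_mat k n X))"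
    by (rule det_lower_triangular[OF _ elim_mat_carrier]) (auto simp: elim_mat_def)
  also have "diag_mat (elim_mat k n X) = replicate k 1"
    by (rule nth_equalityI) (auto simp: diag_mat_def elim_mat_def)
  finally show ?thesis
    unfolding unimodular_def using elim_mat_carrier
    by (intro conjI exI[of _ "1 :: complex"] exI[of _ "0 :: int"]) simp_all
qed

lemma elim_mat_mult_index:
  assumes "Q \<in> carrier_mat k k" "i < k" "j < k"
  shows "(elim_mat k n X * Q) $$ (i, j)
    = (if n \<le> i then add_row_comb n (\<lambda>l j. Q $$ (l, j)) (\<lambda>j. Q $$ (i, j)) (X i) j else Q $$ (i, j))"
proof -
  have "(elim_mat k n X * Q) $$ (i, j) = (\<Sum>l<k. elim_mat k n X $$ (i, l) * Q $$ (l, j))"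
    using assms by (simp add: scalar_prod_def atLeast0LessThan elim_mat_def)
  also have "\<dots> = (\<Sum>l<k. if l = i then Q $$ (l, j) else 0)
      + (\<Sum>l<k. if n \<le> i \<and> l < n then X i l * Q $$ (l, j) else 0)"
    unfolding sum.distrib[symmetric] using assms(2) by (intro sum.cong) (auto simp: elim_mat_def)
  also have "(\<Sum>l<k. if n \<le> i \<and> l < n then X i l * Q $$ (l, j) else 0)
      = (if n \<le> i then \<Sum>l<n. X i l * Q $$ (l, j) else 0)"
  proof -
    have "n \<le> i \<Longrightarrow> {l \<in> {..<k}. l < n} = {..<n}"
      using assms(2) by auto
    then show ?thesis
      by (simp add: sum.inter_filter[symmetric])
  qed
  finally show ?thesis
    using assms(2) by (simp add: add_row_comb_def)
qed

lemma mult_star_elim_mat_index: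
  assumes "A \<in> carrier_mat k k" "i < k" "j < n" "n \<le> k"
  shows "(A * star_mat (elim_mat k n X)) $$ (i, j) = A $$ (i, j)"
proof -
  have unit_row: "elim_mat k n X $$ (j, l) = (if l = j then 1 else 0)" if "l < k" for l
    using assms that by (auto simp: elim_mat_def)
  have "(A * star_mat (elim_mat k n X)) $$ (i, j) = (\<Sum>l<k. A $$ (i, l) * lstar (elim_mat k n X $$ (j, l)))"
    using assms by (simp add: scalar_prod_def atLeast0LessThan elim_mat_carrier[THEN carrier_matD(1)]
        elim_mat_carrier[THEN carrier_matD(2)])
  also have "\<dots> = (\<Sum>l<k. if l = j then A $$ (i, l) else 0)"
    by (intro sum.cong) (simp_all add: unit_row)
  also have "\<dots> = A $$ (i, j)"
    using assms by simp
  finally show ?thesis .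
qed

theorem unimodular_congruence_diag_dom:
  assumes Q: "Q \<in> carrier_mat k k" "hermite Q" and "n \<le> k"
    and block: "dominant_block n (\<lambda>i j. Q $$ (i, j)) D"
  shows "\<exists>U. unimodular k U \<and> (\<forall>t<n. diag_dom_at k (U * Q * star_mat U) t) \<and>
    (\<forall>i<n. \<forall>j<n. (U * Q * star_mat U) $$ (i, j) = Q $$ (i, j))"
proof -
  interpret dominant_block n "\<lambda>i j. Q $$ (i, j)" D
    by (rule block)
  have "\<forall>i. \<exists>x. \<forall>j<n. Poly_Mapping.keys (add_row_comb n (\<lambda>l j. Q $$ (l, j)) (\<lambda>j. Q $$ (i, j)) x j)
      \<subseteq> {- D j + 1..D j}"
    using reduce_into_windows by blast
  then obtain X where X: "\<And>i j. j < n \<Longrightarrow>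
      Poly_Mapping.keys (add_row_comb n (\<lambda>l j. Q $$ (l, j)) (\<lambda>j. Q $$ (i, j)) (X i) j) \<subseteq> {- D j + 1..D j}"
    by metis
  define U where "U = elim_mat k n X"
  define Qt where "Qt = U * Q * star_mat U"
  have UQ: "U * Q \<in> carrier_mat k k"
    unfolding U_def by (rule mult_carrier_mat[OF elim_mat_carrier Q(1)])
  have Qt_left: "Qt $$ (i, j) = (if n \<le> i then add_row_comb n (\<lambda>l j. Q $$ (l, j)) (\<lambda>j. Q $$ (i, j)) (X i) j
      else Q $$ (i, j))" if "i < k" "j < n" for i j
  proof -
    have "Qt $$ (i, j) = (U * Q) $$ (i, j)"
      unfolding Qt_def U_def using UQ that \<open>n \<le> k\<close> by (intro mult_star_elim_mat_index) (simp_all add: U_def)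
    then show ?thesis
      using elim_mat_mult_index[OF Q(1) \<open>i < k\<close>] that \<open>n \<le> k\<close> by (simp add: U_def)
  qed
  have "diag_dom_at k Qt t" if "t < n" for t
  proof (rule diag_dom_at_if_reduced[OF _ _ \<open>n \<le> k\<close> that])
    show "Qt \<in> carrier_mat k k"
      unfolding Qt_def U_def using UQ[unfolded U_def]
      by (rule mult_carrier_mat[OF _ star_mat_carrier[OF elim_mat_carrier]])
    show "hermite Qt"
      unfolding Qt_def by (rule hermite_congruence[OF Q]) (simp add: U_def elim_mat_carrier)
  qed (use Qt_left X \<open>n \<le> k\<close> in auto)
  moreover have "unimodular k U"
    by (simp add: U_def unimodular_elim_mat)
  ultimately show ?thesis
    using Qt_left \<open>n \<le> k\<close> unfolding Qt_def by (intro exI[of _ U]) auto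
qed

theorem lemma4p2:
  fixes k s :: nat and Q :: "lpoly mat"
  assumes "Q \<in> carrier_mat k k"
    and "hermite Q"
    and "Q $$ (0, 0) \<noteq> 0"
    and "\<forall>i j. i \<le> j \<and> j < k \<longrightarrow> llen (Q $$ (i, i)) \<le> llen (Q $$ (j, j))"
    and "s < k"
    and "\<forall>t<s. diag_dom_at k Q t"
  shows "\<exists>U. unimodular k U \<and>
           (let Qt = U * Q * star_mat U in
              (\<forall>t\<le>s. diag_dom_at k Qt t) \<and>
              (\<forall>i\<le>s. \<forall>j\<le>s. Qt $$ (i, j) = Q $$ (i, j)))"
proof -
  have diag_nonzero: "Q $$ (t, t) \<noteq> 0" if "t < k" for t
  proof
    assume "Q $$ (t, t) = 0"
    moreover have "llen (Q $$ (0, 0)) \<le> llen (Q $$ (t, t))"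
      using assms(4) that by blast
    ultimately show False
      using assms(3) by (simp add: llen_def)
  qed
  have "dominant_block (Suc s) (\<lambda>i j. Q $$ (i, j)) (\<lambda>t. Max (Poly_Mapping.keys (Q $$ (t, t))))"
  proof (rule dominant_block_if_diag_dom_at[OF assms(1,2)])
    show "Suc s \<le> k"
      using assms(5) by simp
    show "Q $$ (t, t) \<noteq> 0" if "t < Suc s" for t
      using diag_nonzero that assms(5) by simp
    show "llen (Q $$ (i, i)) \<le> llen (Q $$ (j, j))" if "i \<le> j" "j < Suc s" for i j
      using assms(4) that assms(5) by simp
    show "diag_dom_at k Q t" if "Suc t < Suc s" for t
      using assms(6) that by simp
  qed simp
  then have "\<exists>U. unimodular k U \<and> (\<forall>t<Suc s. diag_dom_at k (U * Q * star_mat U) t) \<and>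
      (\<forall>i<Suc s. \<forall>j<Suc s. (U * Q * star_mat U) $$ (i, j) = Q $$ (i, j))"
    using assms(5) by (intro unimodular_congruence_diag_dom[OF assms(1,2)]) simp_all
  then show ?thesis
    by (simp add: Let_def less_Suc_eq_le)
qed

end
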